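(* Let $S$ be a $\mathcal{C}$-semigroup. Then $\mathrm{SG}(S)=\max_{\le_S}\mathrm{FG}(S)$, the set of maximal elements of $\mathrm{FG}(S)$ with respect to $\le_S$.
   Context: An integer cone $\mathcal{C}\subseteq\mathbb{N}^p$ is the set of integer points of a finitely generated rational cone in $\mathbb{Q}_{\ge0}^p$. A $\mathcal{C}$-semigroup is a subset $S\subseteq\mathcal{C}$ containing $0$, closed under addition, with $\mathcal{C}\setminus S$ finite; $\mathcal{H}(S)=\mathcal{C}\setminus S$. $\mathbf x\le_S\mathbf y$ means $\mathbf y-\mathbf x\in S$. $\mathrm{PF}(S)=\{\mathbf x\in\mathcal{H}(S)\mid\mathbf x+(S\setminus\{0\})\subseteq S\}$, $\mathrm{SG}(S)=\{\mathbf x\in\mathrm{PF}(S)\mid 2\mathbf x\in S\}$, and $\mathrm{FG}(S)=\{\mathbf x\in\mathcal{H}(S)\mid 2\mathbf x\in S,\ 3\mathbf x\in S\}$. *)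

theory Defs
  imports Complex_Main
begin

text \<open>Points of \<open>\<nat>^p\<close> (inside \<open>\<int>^p\<close>) are functions \<open>'n \<Rightarrow> int\<close> on a finite index type
  \<open>'n\<close> with \<open>CARD('n) = p\<close>.\<close>

definition integer_cone :: "('n::finite \<Rightarrow> int) set \<Rightarrow> bool" where
  "integer_cone C \<longleftrightarrow>
     (\<exists>G :: ('n \<Rightarrow> rat) set. finite G \<and> (\<forall>g\<in>G. \<forall>i. g i \<ge> 0) \<and>
        C = {x. \<exists>c :: ('n \<Rightarrow> rat) \<Rightarrow> rat. (\<forall>g\<in>G. c g \<ge> 0) \<and>
                   (\<forall>i. of_int (x i) = (\<Sum>g\<in>G. c g * g i))})"

definition C_semigroup :: "('n::finite \<Rightarrow> int) set \<Rightarrow> ('n \<Rightarrow> int) set \<Rightarrow> bool" where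
  "C_semigroup C S \<longleftrightarrow> integer_cone C \<and> S \<subseteq> C \<and> (\<lambda>i. 0) \<in> S \<and>
     (\<forall>x\<in>S. \<forall>y\<in>S. (\<lambda>i. x i + y i) \<in> S) \<and> finite (C - S)"

definition gaps :: "('n \<Rightarrow> int) set \<Rightarrow> ('n \<Rightarrow> int) set \<Rightarrow> ('n \<Rightarrow> int) set" where
  "gaps C S = C - S"

definition leS :: "('n \<Rightarrow> int) set \<Rightarrow> ('n \<Rightarrow> int) \<Rightarrow> ('n \<Rightarrow> int) \<Rightarrow> bool" where
  "leS S x y \<longleftrightarrow> (\<lambda>i. y i - x i) \<in> S"

definition PF :: "('n \<Rightarrow> int) set \<Rightarrow> ('n \<Rightarrow> int) set \<Rightarrow> ('n \<Rightarrow> int) set" where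
  "PF C S = {x \<in> gaps C S. \<forall>s \<in> S - {\<lambda>i. 0}. (\<lambda>i. x i + s i) \<in> S}"

definition SG :: "('n \<Rightarrow> int) set \<Rightarrow> ('n \<Rightarrow> int) set \<Rightarrow> ('n \<Rightarrow> int) set" where
  "SG C S = {x \<in> PF C S. (\<lambda>i. 2 * x i) \<in> S}"

definition FG :: "('n \<Rightarrow> int) set \<Rightarrow> ('n \<Rightarrow> int) set \<Rightarrow> ('n \<Rightarrow> int) set" where
  "FG C S = {x \<in> gaps C S. (\<lambda>i. 2 * x i) \<in> S \<and> (\<lambda>i. 3 * x i) \<in> S}"

definition maximals_leS :: "('n \<Rightarrow> int) set \<Rightarrow> ('n \<Rightarrow> int) set \<Rightarrow> ('n \<Rightarrow> int) set" where
  "maximals_leS S A = {x \<in> A. \<forall>y \<in> A. leS S x y \<longrightarrow> y = x}"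

end

theory Submission
  imports Defs
begin

text \<open>If \<open>x\<close> is a pseudo-Frobenius element with \<open>2x \<in> S\<close>, then \<open>3x = x + 2x \<in> S\<close>, and no
  other gap lies above \<open>x\<close> in \<open>\<le>\<^sub>S\<close>, since \<open>x\<close> plus a nonzero element of \<open>S\<close> lies in \<open>S\<close>.
  Conversely, if \<open>x \<in> FG(S)\<close> and \<open>s \<in> S\<close> with \<open>x + s\<close> a gap, then \<open>2(x+s)\<close> and
  \<open>3(x+s)\<close> are sums of elements of \<open>S\<close>, so \<open>x + s \<in> FG(S)\<close>; maximality of \<open>x\<close> forces
  \<open>s = 0\<close>, i.e. \<open>x \<in> PF(S)\<close>.\<close>

lemma integer_cone_add:
  assumes "integer_cone C" "x \<in> C" "y \<in> C"
  shows "(\<lambda>i. x i + y i) \<in> C"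
proof -
  obtain G :: "('a \<Rightarrow> rat) set" where G: "C = {x. \<exists>c :: ('a \<Rightarrow> rat) \<Rightarrow> rat. (\<forall>g\<in>G. c g \<ge> 0) \<and>
                   (\<forall>i. of_int (x i) = (\<Sum>g\<in>G. c g * g i))}"
    using assms(1) unfolding integer_cone_def by blast
  obtain c where c: "\<forall>g\<in>G. c g \<ge> 0" "\<forall>i. of_int (x i) = (\<Sum>g\<in>G. c g * g i)"
    using assms(2) G by blast
  obtain d where d: "\<forall>g\<in>G. d g \<ge> 0" "\<forall>i. of_int (y i) = (\<Sum>g\<in>G. d g * g i)"
    using assms(3) G by blast
  have "\<forall>g\<in>G. c g + d g \<ge> 0" using c d by auto
  moreover have "\<forall>i. of_int (x i + y i) = (\<Sum>g\<in>G. (c g + d g) * g i)"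
    using c d by (simp add: distrib_right sum.distrib)
  ultimately show ?thesis
    unfolding G by (intro CollectI exI[of _ "\<lambda>g. c g + d g"] conjI) simp_all
qed

lemma SG_subset_maximals_FG:
  assumes zero: "(\<lambda>i. 0) \<in> S"
  shows "SG C S \<subseteq> maximals_leS S (FG C S)"
proof
  fix x assume "x \<in> SG C S"
  then have gap: "x \<in> gaps C S" and x2: "(\<lambda>i. 2 * x i) \<in> S"
    and pf: "\<And>s. s \<in> S \<Longrightarrow> s \<noteq> (\<lambda>i. 0) \<Longrightarrow> (\<lambda>i. x i + s i) \<in> S"
    unfolding SG_def PF_def by auto
  have "x \<noteq> (\<lambda>i. 0)"
    using gap zero unfolding gaps_def by auto
  then have "(\<lambda>i. 2 * x i) \<noteq> (\<lambda>i. 0)"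
    by (auto simp: fun_eq_iff)
  from pf[OF x2 this] have x3: "(\<lambda>i. 3 * x i) \<in> S"
    by (simp add: algebra_simps)
  have "y = x" if y: "y \<in> FG C S" "leS S x y" for y
  proof (rule ccontr)
    assume "y \<noteq> x"
    then have "(\<lambda>i. y i - x i) \<noteq> (\<lambda>i. 0)"
      by (auto simp: fun_eq_iff)
    from pf[OF _ this] y show False
      unfolding leS_def FG_def gaps_def by auto
  qed
  with gap x2 x3 show "x \<in> maximals_leS S (FG C S)"
    unfolding maximals_leS_def FG_def by auto
qed

lemma FG_add_gap:
  assumes add: "\<And>x y. x \<in> S \<Longrightarrow> y \<in> S \<Longrightarrow> (\<lambda>i. x i + y i) \<in> S"
    and x: "x \<in> FG C S" and s: "s \<in> S" and gap: "(\<lambda>i. x i + s i) \<in> gaps C S"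
  shows "(\<lambda>i. x i + s i) \<in> FG C S"
proof -
  have x2: "(\<lambda>i. 2 * x i) \<in> S" and x3: "(\<lambda>i. 3 * x i) \<in> S"
    using x unfolding FG_def by auto
  have s2: "(\<lambda>i. s i + s i) \<in> S"
    using add[OF s s] .
  have "(\<lambda>i. 2 * x i + (s i + s i)) \<in> S"
    using add[OF x2 s2] .
  moreover have "(\<lambda>i. 3 * x i + (s i + s i + s i)) \<in> S"
    using add[OF x3 add[OF s2 s]] .
  ultimately show ?thesis
    using gap unfolding FG_def by (simp add: algebra_simps)
qed

lemma maximals_FG_subset_SG:
  assumes C_add: "\<And>x y. x \<in> C \<Longrightarrow> y \<in> C \<Longrightarrow> (\<lambda>i. x i + y i) \<in> C"
    and S_add: "\<And>x y. x \<in> S \<Longrightarrow> y \<in> S \<Longrightarrow> (\<lambda>i. x i + y i) \<in> S"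
    and "S \<subseteq> C"
  shows "maximals_leS S (FG C S) \<subseteq> SG C S"
proof
  fix x assume "x \<in> maximals_leS S (FG C S)"
  then have fg: "x \<in> FG C S" and max: "\<And>y. y \<in> FG C S \<Longrightarrow> leS S x y \<Longrightarrow> y = x"
    unfolding maximals_leS_def by auto
  have "(\<lambda>i. x i + s i) \<in> S" if s: "s \<in> S" "s \<noteq> (\<lambda>i. 0)" for s
  proof (rule ccontr)
    assume "(\<lambda>i. x i + s i) \<notin> S"
    moreover have "x \<in> C" "s \<in> C"
      using fg s \<open>S \<subseteq> C\<close> unfolding FG_def gaps_def by auto
    ultimately have "(\<lambda>i. x i + s i) \<in> gaps C S"
      using C_add unfolding gaps_def by blast
    with S_add fg s(1) have "(\<lambda>i. x i + s i) \<in> FG C S"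
      by (rule FG_add_gap)
    moreover have "leS S x (\<lambda>i. x i + s i)"
      using s unfolding leS_def by simp
    ultimately have "(\<lambda>i. x i + s i) = x"
      by (rule max)
    with s show False
      by (auto simp: fun_eq_iff)
  qed
  with fg show "x \<in> SG C S"
    unfolding SG_def PF_def FG_def by auto
qed

theorem mainTheorem16:
  fixes C S :: "('n::finite \<Rightarrow> int) set"
  assumes "C_semigroup C S"
  shows "SG C S = maximals_leS S (FG C S)"
proof
  from assms have cone: "integer_cone C" and "S \<subseteq> C" and "(\<lambda>i. 0) \<in> S"
    and S_add: "\<And>x y. x \<in> S \<Longrightarrow> y \<in> S \<Longrightarrow> (\<lambda>i. x i + y i) \<in> S"
    unfolding C_semigroup_def by auto
  show "SG C S \<subseteq> maximals_leS S (FG C S)"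
    by (rule SG_subset_maximals_FG) fact
  show "maximals_leS S (FG C S) \<subseteq> SG C S"
    using integer_cone_add[OF cone] S_add \<open>S \<subseteq> C\<close> by (rule maximals_FG_subset_SG)
qed

end
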